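(* Let $H$ be a connected finite loopless graph with a marked vertex $v_0$ and $L$ a connected finite graph with at least $\deg_H(v_0)$ vertices. Let $G$ be obtained from $H$ by deleting $v_0$, adding a disjoint copy of $L$, and attaching each edge of $H$ formerly incident to $v_0$ to a vertex of $L$, distinct edges to distinct vertices. If $L$ has two edge-disjoint spanning trees (i.e. $M(L)$ has two disjoint bases), then $f(M(G))\le f(M(H))$.
   Context: $M(K)$ denotes the graphic matroid of a graph $K$ (bases: edge sets of spanning trees for connected $K$). For a matroid $M$, the distance between bases $B,B'$ is $|B\triangle B'|$; the Borsuk number $f(M)$ is the minimum number of parts in a partition of the set of bases in which each part has diameter strictly smaller than the diameter of the set of all bases ($f(M)=+\infty$ if $M$ has exactly one basis). *)

theory Defs
  imports Main "HOL-Library.Extended_Nat"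
begin

text \<open>Finite multigraphs: vertex set V, edge set E, and an endpoint map
  ends :: 'e \<Rightarrow> 'v \<times> 'v (loops and parallel edges allowed).\<close>

definition wf_graph :: "'v set \<Rightarrow> 'e set \<Rightarrow> ('e \<Rightarrow> 'v \<times> 'v) \<Rightarrow> bool" where
  "wf_graph V E ends \<longleftrightarrow> finite V \<and> finite E \<and> (\<forall>e\<in>E. fst (ends e) \<in> V \<and> snd (ends e) \<in> V)"

definition loopless :: "'e set \<Rightarrow> ('e \<Rightarrow> 'v \<times> 'v) \<Rightarrow> bool" where
  "loopless E ends \<longleftrightarrow> (\<forall>e\<in>E. fst (ends e) \<noteq> snd (ends e))"

definition adj :: "'e set \<Rightarrow> ('e \<Rightarrow> 'v \<times> 'v) \<Rightarrow> ('v \<times> 'v) set" where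
  "adj F ends = {(u, w). \<exists>e\<in>F. ends e = (u, w) \<or> ends e = (w, u)}"

definition connected_on :: "'v set \<Rightarrow> 'e set \<Rightarrow> ('e \<Rightarrow> 'v \<times> 'v) \<Rightarrow> bool" where
  "connected_on V F ends \<longleftrightarrow> V \<noteq> {} \<and> (\<forall>u\<in>V. \<forall>w\<in>V. (u, w) \<in> (adj F ends)\<^sup>*)"

definition spanning_tree :: "'v set \<Rightarrow> 'e set \<Rightarrow> ('e \<Rightarrow> 'v \<times> 'v) \<Rightarrow> 'e set \<Rightarrow> bool" where
  "spanning_tree V E ends T \<longleftrightarrow> T \<subseteq> E \<and> connected_on V T ends \<and>
     (\<forall>e\<in>T. \<not> connected_on V (T - {e}) ends)"

definition graphic_bases :: "'v set \<Rightarrow> 'e set \<Rightarrow> ('e \<Rightarrow> 'v \<times> 'v) \<Rightarrow> 'e set set" where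
  "graphic_bases V E ends = {T. spanning_tree V E ends T}"

definition degree :: "'e set \<Rightarrow> ('e \<Rightarrow> 'v \<times> 'v) \<Rightarrow> 'v \<Rightarrow> nat" where
  "degree E ends v = card {e\<in>E. fst (ends e) = v} + card {e\<in>E. snd (ends e) = v}"

definition bdiam :: "'e set set \<Rightarrow> nat" where
  "bdiam S = Max {card ((B - B') \<union> (B' - B)) | B B'. B \<in> S \<and> B' \<in> S}"

definition is_partition :: "'a set set \<Rightarrow> 'a set \<Rightarrow> bool" where
  "is_partition P S \<longleftrightarrow> \<Union>P = S \<and> {} \<notin> P \<and> (\<forall>X\<in>P. \<forall>Y\<in>P. X \<noteq> Y \<longrightarrow> X \<inter> Y = {})"

definition borsuk :: "'e set set \<Rightarrow> enat" where
  "borsuk \<B> = (if card \<B> = 1 then \<infinity> else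
     enat (LEAST k. \<exists>P. is_partition P \<B> \<and> card P = k \<and> (\<forall>X\<in>P. bdiam X < bdiam \<B>)))"

text \<open>The graph G: delete v0 from H, add L, reattach each edge formerly incident
  to v0 to the vertex phi e of L.\<close>
definition glue_vertices :: "'v set \<Rightarrow> 'v \<Rightarrow> 'w set \<Rightarrow> ('v + 'w) set" where
  "glue_vertices VH v0 VL = Inl ` (VH - {v0}) \<union> Inr ` VL"

definition glue_edges :: "'e set \<Rightarrow> 'f set \<Rightarrow> ('e + 'f) set" where
  "glue_edges EH EL = Inl ` EH \<union> Inr ` EL"

definition glue_ends :: "('e \<Rightarrow> 'v \<times> 'v) \<Rightarrow> 'v \<Rightarrow> ('f \<Rightarrow> 'w \<times> 'w) \<Rightarrow> ('e \<Rightarrow> 'w)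
    \<Rightarrow> ('e + 'f) \<Rightarrow> ('v + 'w) \<times> ('v + 'w)" where
  "glue_ends endsH v0 endsL phi x = (case x of
      Inl e \<Rightarrow> (let r = (\<lambda>u. if u = v0 then Inr (phi e) else Inl u)
               in (r (fst (endsH e)), r (snd (endsH e))))
    | Inr f \<Rightarrow> (Inr (fst (endsL f)), Inr (snd (endsL f))))"

end

theory Submission
  imports Defs
begin

text \<open>Contracting the copy of L in G back to the vertex v0 turns every spanning tree B of G into
  a connected spanning subgraph of H, so B contains (the image of) a spanning tree p B of H.
  All spanning trees of G have the same number of edges, hence
  |B \<triangle> B'| \<le> |p B \<triangle> p B'| + 2 (|V(L)| - 1). Conversely, extending two spanning trees
  of H at maximal distance by two edge-disjoint spanning trees of L gives spanning trees of G
  at distance diam M(H) + 2 (|V(L)| - 1). So pulling an optimal partition of the bases of M(H)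
  back along p partitions the bases of M(G) into at most as many parts, each of diameter
  smaller than diam M(G).\<close>

section \<open>Connectivity and connected components\<close>

lemma sym_adj: "sym (adj F ends)"
  by (auto simp: sym_def adj_def)

lemma adj_rtrancl_sym: "(x, y) \<in> (adj F ends)\<^sup>* \<Longrightarrow> (y, x) \<in> (adj F ends)\<^sup>*"
  using sym_rtrancl[OF sym_adj] by (rule symD)

lemma adj_mono: "F \<subseteq> F' \<Longrightarrow> adj F ends \<subseteq> adj F' ends"
  by (auto simp: adj_def)

lemma adj_insert:
  "adj (insert e F) ends = adj F ends \<union> {(fst (ends e), snd (ends e)), (snd (ends e), fst (ends e))}"
  by (cases "ends e") (auto simp: adj_def)

lemma rtrancl_insert_pair_iff:
  "(x, y) \<in> (R \<union> {(a, b), (b, a)})\<^sup>* \<longleftrightarrow>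
     (x, y) \<in> R\<^sup>* \<or> (x, a) \<in> R\<^sup>* \<and> (b, y) \<in> R\<^sup>* \<or> (x, b) \<in> R\<^sup>* \<and> (a, y) \<in> R\<^sup>*"
    (is "?lhs \<longleftrightarrow> ?rhs")
proof
  show "?lhs \<Longrightarrow> ?rhs"
    by (induction rule: rtrancl_induct) (auto intro: rtrancl_into_rtrancl)
  have "R\<^sup>* \<subseteq> (R \<union> {(a, b), (b, a)})\<^sup>*"
    by (rule rtrancl_mono) blast
  then show "?rhs \<Longrightarrow> ?lhs"
    by (meson insertI1 insert_subset r_into_rtrancl rtrancl_trans subsetD sup.cobounded2)
qed

lemma rtrancl_map_rtrancl:
  assumes "(x, y) \<in> r\<^sup>*" and "\<And>x y. (x, y) \<in> r \<Longrightarrow> (h x, h y) \<in> s\<^sup>*"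
  shows "(h x, h y) \<in> s\<^sup>*"
  using assms(1) by induction (auto intro: rtrancl_trans dest: assms(2))

lemma rtrancl_adj_insert_absorb:
  assumes "(fst (ends e), snd (ends e)) \<in> (adj F ends)\<^sup>*"
  shows "(adj (insert e F) ends)\<^sup>* = (adj F ends)\<^sup>*"
proof (rule rtrancl_subset)
  show "adj F ends \<subseteq> adj (insert e F) ends"
    by (rule adj_mono) blast
  show "adj (insert e F) ends \<subseteq> (adj F ends)\<^sup>*"
    using assms adj_rtrancl_sym[OF assms] by (auto simp: adj_insert)
qed

lemma rtrancl_adj_insert_cong:
  assumes "(adj F ends)\<^sup>* = (adj F' ends)\<^sup>*"
  shows "(adj (insert e F) ends)\<^sup>* = (adj (insert e F') ends)\<^sup>*"
  by (metis adj_insert assms rtrancl_Un_rtrancl)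

lemma wf_graph_subset: "wf_graph V E ends \<Longrightarrow> F \<subseteq> E \<Longrightarrow> wf_graph V F ends"
  by (auto simp: wf_graph_def intro: finite_subset)

lemma connected_onI_root:
  assumes "r \<in> V" "\<And>x. x \<in> V \<Longrightarrow> (r, x) \<in> (adj F ends)\<^sup>*"
  shows "connected_on V F ends"
  unfolding connected_on_def using assms by (blast intro: rtrancl_trans adj_rtrancl_sym)

definition component :: "'v set \<Rightarrow> 'e set \<Rightarrow> ('e \<Rightarrow> 'v \<times> 'v) \<Rightarrow> 'v \<Rightarrow> 'v set" where
  "component V F ends v = {w \<in> V. (v, w) \<in> (adj F ends)\<^sup>*}"

definition components :: "'v set \<Rightarrow> 'e set \<Rightarrow> ('e \<Rightarrow> 'v \<times> 'v) \<Rightarrow> 'v set set" where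
  "components V F ends = component V F ends ` V"

lemma component_self: "v \<in> V \<Longrightarrow> v \<in> component V F ends v"
  by (simp add: component_def)

lemma component_eq:
  "w \<in> component V F ends v \<Longrightarrow> component V F ends w = component V F ends v"
  unfolding component_def by (auto dest: adj_rtrancl_sym intro: rtrancl_trans)

lemma component_notin_image_complement:
  assumes "v \<in> component V F ends u" "v \<in> Y"
  shows "Y \<notin> component V F ends ` (V - component V F ends u)"
proof
  assume "Y \<in> component V F ends ` (V - component V F ends u)"
  then obtain x where "x \<in> V" "x \<notin> component V F ends u" "Y = component V F ends x"
    by blast
  moreover from this have "component V F ends x = component V F ends u"
    using assms component_eq by metis
  ultimately show False
    using component_self by metis
qed

lemma card_components_no_edges: "card (components V {} ends) = card V"
proof -
  have "adj {} ends = {}"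
    by (simp add: adj_def)
  then have "components V {} ends = (\<lambda>v. {v}) ` V"
    by (auto simp: components_def component_def)
  then show ?thesis
    by (simp add: card_image)
qed

lemma components_connected_on: "connected_on V F ends \<Longrightarrow> components V F ends = {V}"
  unfolding connected_on_def components_def component_def by auto

lemma component_insert:
  assumes "ends e = (a, b)" and "x \<in> V"
  shows "component V (insert e F) ends x =
    (if x \<in> component V F ends a \<union> component V F ends b
     then component V F ends a \<union> component V F ends b else component V F ends x)"
proof -
  let ?R = "adj F ends"
  have reach: "(y, w) \<in> (adj (insert e F) ends)\<^sup>* \<longleftrightarrow>
      (y, w) \<in> ?R\<^sup>* \<or> (y, a) \<in> ?R\<^sup>* \<and> (b, w) \<in> ?R\<^sup>* \<or> (y, b) \<in> ?R\<^sup>* \<and> (a, w) \<in> ?R\<^sup>*" for y w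
    unfolding adj_insert assms(1) fst_conv snd_conv by (rule rtrancl_insert_pair_iff)
  show ?thesis
    using assms(2) unfolding component_def reach by (auto dest: adj_rtrancl_sym intro: rtrancl_trans)
qed

lemma card_components_insert_bridge:
  assumes "finite V" "ends e = (a, b)" "a \<in> V" "b \<in> V" "(a, b) \<notin> (adj F ends)\<^sup>*"
  shows "card (components V (insert e F) ends) + 1 = card (components V F ends)"
proof -
  let ?C = "component V F ends"
  define U where "U = ?C a \<union> ?C b"
  define N where "N = ?C ` (V - U)"
  have "U \<subseteq> V"
    by (auto simp: U_def component_def)
  then have V_split: "V = U \<union> (V - U)"
    by blast
  have "?C ` U = {?C a, ?C b}"
    using component_eq component_self assms(3,4) by (fastforce simp: U_def)
  moreover have "components V F ends = ?C ` U \<union> N"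
    unfolding components_def N_def by (metis V_split image_Un)
  ultimately have old: "components V F ends = insert (?C a) (insert (?C b) N)"
    by simp
  have "component V (insert e F) ends x = U" if "x \<in> U" for x
    using component_insert[where ends = ends and e = e and F = F, OF assms(2)] that \<open>U \<subseteq> V\<close>
    by (auto simp: U_def)
  moreover have "a \<in> U"
    using assms(3) component_self by (auto simp: U_def)
  ultimately have "component V (insert e F) ends ` U = {U}"
    by blast
  moreover have "component V (insert e F) ends ` (V - U) = N"
    using component_insert[where ends = ends and e = e and F = F, OF assms(2)] by (auto simp: N_def U_def)
  ultimately have new: "components V (insert e F) ends = insert U N"
    unfolding components_def by (metis V_split image_Un insert_is_Un)
  have not_in_N: "Y \<notin> N" if "v \<in> Y" "v \<in> U" for Y v
    using that component_notin_image_complement[of v V F ends] by (auto simp: N_def U_def)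
  have "a \<in> ?C a" "b \<in> ?C b"
    using assms(3,4) by (simp_all add: component_self)
  then have "?C a \<notin> N" "?C b \<notin> N" "U \<notin> N"
    using not_in_N[of a] not_in_N[of b] by (auto simp: U_def)
  moreover have "?C a \<noteq> ?C b"
    using assms(4,5) by (auto simp: component_def)
  moreover have "finite N"
    using assms(1) by (simp add: N_def)
  ultimately show ?thesis
    by (simp add: old new)
qed

lemma card_le_components_plus_edges:
  "wf_graph V F ends \<Longrightarrow> card V \<le> card (components V F ends) + card F"
proof (induction F rule: infinite_finite_induct)
  case (insert e F)
  obtain a b where ab: "ends e = (a, b)"
    by fastforce
  have "card V \<le> card (components V F ends) + card F"
    using insert by (auto simp: wf_graph_def)
  moreover have "card (components V F ends) \<le> card (components V (insert e F) ends) + 1"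
  proof (cases "(a, b) \<in> (adj F ends)\<^sup>*")
    case True
    then show ?thesis
      using rtrancl_adj_insert_absorb[of ends e F] ab by (simp add: components_def component_def)
  next
    case False
    then show ?thesis
      using card_components_insert_bridge[of V ends e a b F] insert.prems ab
      by (force simp: wf_graph_def)
  qed
  ultimately show ?case
    using insert.hyps by simp
qed (auto simp: wf_graph_def card_components_no_edges)

lemma redundant_edge_if_card_lt:
  "wf_graph V F ends \<Longrightarrow> card V < card (components V F ends) + card F \<Longrightarrow>
    \<exists>e\<in>F. (adj (F - {e}) ends)\<^sup>* = (adj F ends)\<^sup>*"
proof (induction F rule: infinite_finite_induct)
  case (insert e F)
  obtain a b where ab: "ends e = (a, b)"
    by fastforce
  show ?case
  proof (cases "(a, b) \<in> (adj F ends)\<^sup>*")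
    case True
    then have "(adj (insert e F - {e}) ends)\<^sup>* = (adj (insert e F) ends)\<^sup>*"
      using rtrancl_adj_insert_absorb[of ends e F] ab insert.hyps(2) by simp
    then show ?thesis
      by blast
  next
    case False
    then have "card (components V (insert e F) ends) + 1 = card (components V F ends)"
      using card_components_insert_bridge[of V ends e a b F] insert.prems(1) ab
      by (force simp: wf_graph_def)
    then obtain e' where e': "e' \<in> F" "(adj (F - {e'}) ends)\<^sup>* = (adj F ends)\<^sup>*"
      using insert by (auto simp: wf_graph_def)
    then have "insert e F - {e'} = insert e (F - {e'})"
      using insert.hyps(2) by auto
    then have "(adj (insert e F - {e'}) ends)\<^sup>* = (adj (insert e F) ends)\<^sup>*"
      using rtrancl_adj_insert_cong[OF e'(2)] by simp
    then show ?thesis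
      using e'(1) by blast
  qed
qed (auto simp: wf_graph_def card_components_no_edges)

lemma connected_on_card_le:
  "wf_graph V F ends \<Longrightarrow> connected_on V F ends \<Longrightarrow> card V \<le> card F + 1"
  using card_le_components_plus_edges[of V F ends] by (simp add: components_connected_on)

lemma connected_on_remove_edge:
  assumes "wf_graph V F ends" "connected_on V F ends" "card V < card F + 1"
  shows "\<exists>e\<in>F. connected_on V (F - {e}) ends"
proof -
  obtain e where "e \<in> F" "(adj (F - {e}) ends)\<^sup>* = (adj F ends)\<^sup>*"
    using redundant_edge_if_card_lt[OF assms(1)] assms(2,3) by (auto simp: components_connected_on)
  moreover from this(2) have "connected_on V (F - {e}) ends"
    using assms(2) by (simp add: connected_on_def)
  ultimately show ?thesis
    by blast
qed

section \<open>Spanning trees\<close>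

lemma spanning_tree_card:
  assumes "wf_graph V E ends" "spanning_tree V E ends T"
  shows "card V = card T + 1"
proof -
  have "wf_graph V T ends" "connected_on V T ends" "\<forall>e\<in>T. \<not> connected_on V (T - {e}) ends"
    using assms wf_graph_subset by (auto simp: spanning_tree_def)
  then show ?thesis
    using connected_on_card_le connected_on_remove_edge by (metis le_neq_implies_less)
qed

lemma spanning_treeI_card:
  assumes "wf_graph V E ends" "T \<subseteq> E" "connected_on V T ends" "card V = card T + 1"
  shows "spanning_tree V E ends T"
  unfolding spanning_tree_def
proof (intro conjI assms ballI notI)
  fix e assume e: "e \<in> T" and connected: "connected_on V (T - {e}) ends"
  have "wf_graph V T ends"
    using assms(1,2) by (rule wf_graph_subset)
  then have "wf_graph V (T - {e}) ends" "finite T"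
    by (auto simp: wf_graph_subset wf_graph_def)
  have "card V \<le> card (T - {e}) + 1"
    using \<open>wf_graph V (T - {e}) ends\<close> connected by (rule connected_on_card_le)
  moreover have "card (T - {e}) < card T"
    using \<open>finite T\<close> e by (rule card_Diff1_less)
  ultimately show False
    using assms(4) by simp
qed

lemma connected_on_spanning_tree_exists:
  "finite F \<Longrightarrow> connected_on V F ends \<Longrightarrow> F \<subseteq> E \<Longrightarrow> \<exists>T\<subseteq>F. spanning_tree V E ends T"
proof (induction F rule: finite_psubset_induct)
  case (psubset F)
  show ?case
  proof (cases "\<exists>e\<in>F. connected_on V (F - {e}) ends")
    case True
    then obtain e where "e \<in> F" "connected_on V (F - {e}) ends"
      by blast
    then show ?thesis
      using psubset.IH[of "F - {e}"] psubset.hyps psubset.prems(2) by blast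
  next
    case False
    then show ?thesis
      using psubset.prems by (auto simp: spanning_tree_def)
  qed
qed

lemma graphic_bases_nonempty:
  "wf_graph V E ends \<Longrightarrow> connected_on V E ends \<Longrightarrow> graphic_bases V E ends \<noteq> {}"
  using connected_on_spanning_tree_exists[of E V ends E] by (auto simp: graphic_bases_def wf_graph_def)

lemma finite_graphic_bases: "wf_graph V E ends \<Longrightarrow> finite (graphic_bases V E ends)"
  by (rule finite_subset[of _ "Pow E"]) (auto simp: graphic_bases_def spanning_tree_def wf_graph_def)

section \<open>Symmetric distance, diameter and the Borsuk number\<close>

definition sym_dist :: "'a set \<Rightarrow> 'a set \<Rightarrow> nat" where
  "sym_dist A B = card ((A - B) \<union> (B - A))"

lemma sym_dist_self: "sym_dist A A = 0"
  by (simp add: sym_dist_def)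

lemma sym_dist_add_card_Int:
  assumes "finite A" "finite B"
  shows "sym_dist A B + 2 * card (A \<inter> B) = card A + card B"
proof -
  have "sym_dist A B = card (A - B) + card (B - A)"
    unfolding sym_dist_def using assms by (intro card_Un_disjoint) auto
  moreover have "card A = card (A \<inter> B) + card (A - B)" "card B = card (B \<inter> A) + card (B - A)"
    using assms by (simp_all add: card_Int_Diff)
  ultimately show ?thesis
    by (simp add: Int_commute)
qed

lemma sym_dist_le_of_card_Int_le:
  assumes "finite A" "finite A'" "finite B" "finite B'" "card (A \<inter> A') \<le> card (B \<inter> B')"
  shows "sym_dist B B' + card A + card A' \<le> sym_dist A A' + card B + card B'"
  using sym_dist_add_card_Int[of A A'] sym_dist_add_card_Int[of B B'] assms by linarith

lemma sym_dist_Inl_Inr: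
  assumes "finite A" "finite A'" "finite S" "finite S'"
  shows "sym_dist (Inl ` A \<union> Inr ` S) (Inl ` A' \<union> Inr ` S') = sym_dist A A' + sym_dist S S'"
proof -
  have "(Inl ` A \<union> Inr ` S) - (Inl ` A' \<union> Inr ` S') \<union> ((Inl ` A' \<union> Inr ` S') - (Inl ` A \<union> Inr ` S))
      = Inl ` ((A - A') \<union> (A' - A)) \<union> Inr ` ((S - S') \<union> (S' - S))"
    by blast
  then show ?thesis
    using assms card_Plus[of "(A - A') \<union> (A' - A)" "(S - S') \<union> (S' - S)"]
    by (simp add: sym_dist_def Plus_def)
qed

lemma sym_dist_disjoint: "A \<inter> B = {} \<Longrightarrow> sym_dist A B = card (A \<union> B)"
  by (simp add: sym_dist_def Diff_triv Int_commute)

lemma bdiam_eq_Max: "bdiam S = Max ((\<lambda>(B, B'). sym_dist B B') ` (S \<times> S))"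
  unfolding bdiam_def sym_dist_def by (rule arg_cong[where f = Max]) auto

lemma sym_dist_le_bdiam: "finite S \<Longrightarrow> B \<in> S \<Longrightarrow> B' \<in> S \<Longrightarrow> sym_dist B B' \<le> bdiam S"
  unfolding bdiam_eq_Max by (rule Max_ge) auto

lemma bdiam_attained:
  assumes "finite S" "S \<noteq> {}"
  obtains B B' where "B \<in> S" "B' \<in> S" "bdiam S = sym_dist B B'"
proof -
  have "bdiam S \<in> (\<lambda>(B, B'). sym_dist B B') ` (S \<times> S)"
    unfolding bdiam_eq_Max using assms by (intro Max_in) auto
  then show ?thesis
    using that by auto
qed

lemma bdiam_singleton: "bdiam {B} = 0"
  by (simp add: bdiam_eq_Max sym_dist_self)

lemma bdiam_pos:
  assumes "finite S" "\<And>B. B \<in> S \<Longrightarrow> finite B" "card S \<noteq> 1" "B \<in> S"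
  shows "0 < bdiam S"
proof -
  have "S \<noteq> {B}"
    using assms(3) by auto
  then obtain B' where "B' \<in> S" "B' \<noteq> B"
    using assms(4) by blast
  then have "0 < sym_dist B B'"
    using assms(2,4) by (auto simp: sym_dist_def)
  also have "\<dots> \<le> bdiam S"
    using assms(1,4) \<open>B' \<in> S\<close> by (rule sym_dist_le_bdiam)
  finally show ?thesis .
qed

lemma is_partition_preimage:
  assumes "is_partition P S" "p ` T \<subseteq> S"
  shows "is_partition ((\<lambda>X. {x \<in> T. p x \<in> X}) ` P - {{}}) T"
  unfolding is_partition_def
proof (intro conjI ballI impI)
  show "\<Union> ((\<lambda>X. {x \<in> T. p x \<in> X}) ` P - {{}}) = T"
  proof (intro equalityI subsetI)
    fix x assume "x \<in> T"
    then obtain X where "X \<in> P" "p x \<in> X"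
      using assms unfolding is_partition_def by blast
    with \<open>x \<in> T\<close> show "x \<in> \<Union> ((\<lambda>X. {x \<in> T. p x \<in> X}) ` P - {{}})"
      by blast
  qed blast
  show "{} \<notin> (\<lambda>X. {x \<in> T. p x \<in> X}) ` P - {{}}"
    by blast
next
  fix Y Y' assume "Y \<in> (\<lambda>X. {x \<in> T. p x \<in> X}) ` P - {{}}" "Y' \<in> (\<lambda>X. {x \<in> T. p x \<in> X}) ` P - {{}}"
    and "Y \<noteq> Y'"
  then obtain X X' where "X \<in> P" "X' \<in> P" "X \<noteq> X'"
    "Y = {x \<in> T. p x \<in> X}" "Y' = {x \<in> T. p x \<in> X'}"
    by blast
  then show "Y \<inter> Y' = {}"
    using assms(1) unfolding is_partition_def by blast
qed

lemma borsuk_le_card: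
  assumes "card S \<noteq> 1" "is_partition P S" "\<And>X. X \<in> P \<Longrightarrow> bdiam X < bdiam S"
  shows "borsuk S \<le> enat (card P)"
  using assms by (auto simp: borsuk_def intro!: Least_le)

lemma optimal_partition_exists:
  assumes "finite S" "\<And>B. B \<in> S \<Longrightarrow> finite B" "card S \<noteq> 1"
  obtains P where "is_partition P S" "\<forall>X\<in>P. bdiam X < bdiam S" "borsuk S = enat (card P)"
proof -
  let ?ok = "\<lambda>k. \<exists>P. is_partition P S \<and> card P = k \<and> (\<forall>X\<in>P. bdiam X < bdiam S)"
  have "is_partition ((\<lambda>B. {B}) ` S) S"
    by (auto simp: is_partition_def)
  moreover have "\<forall>X\<in>(\<lambda>B. {B}) ` S. bdiam X < bdiam S"
    using bdiam_pos[OF assms] by (auto simp: bdiam_singleton)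
  ultimately have "?ok (card ((\<lambda>B. {B}) ` S))"
    by blast
  then have "?ok (LEAST k. ?ok k)"
    by (rule LeastI)
  then show ?thesis
    using that assms(3) by (auto simp: borsuk_def)
qed

lemma bdiam_preimage_le:
  assumes "finite X" "finite \<G>" "{B \<in> \<G>. p B \<in> X} \<noteq> {}"
    and "\<And>B B'. B \<in> \<G> \<Longrightarrow> B' \<in> \<G> \<Longrightarrow> sym_dist B B' \<le> sym_dist (p B) (p B') + c"
  shows "bdiam {B \<in> \<G>. p B \<in> X} \<le> bdiam X + c"
proof -
  have "finite {B \<in> \<G>. p B \<in> X}"
    using assms(2) by simp
  then obtain B B' where B: "B \<in> \<G>" "p B \<in> X" "B' \<in> \<G>" "p B' \<in> X"
    and diam: "bdiam {B \<in> \<G>. p B \<in> X} = sym_dist B B'"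
    using assms(3) by (rule bdiam_attained) blast
  have "bdiam {B \<in> \<G>. p B \<in> X} \<le> sym_dist (p B) (p B') + c"
    using diam B assms(4) by simp
  also have "\<dots> \<le> bdiam X + c"
    using sym_dist_le_bdiam[OF assms(1)] B by simp
  finally show ?thesis .
qed

lemma borsuk_le_of_pullback:
  fixes p :: "'a set \<Rightarrow> 'b set" and c :: nat
  assumes "finite \<G>" "finite \<H>" "\<And>A. A \<in> \<H> \<Longrightarrow> finite A" "p ` \<G> \<subseteq> \<H>"
    and dist: "\<And>B B'. B \<in> \<G> \<Longrightarrow> B' \<in> \<G> \<Longrightarrow> sym_dist B B' \<le> sym_dist (p B) (p B') + c"
    and diam: "bdiam \<H> + c \<le> bdiam \<G>"
  shows "borsuk \<G> \<le> borsuk \<H>"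
proof (cases "card \<H> = 1")
  case True
  then show ?thesis
    by (simp add: borsuk_def)
next
  case False
  obtain P where P: "is_partition P \<H>" "\<forall>X\<in>P. bdiam X < bdiam \<H>" "borsuk \<H> = enat (card P)"
    using optimal_partition_exists[OF assms(2,3) False] by blast
  define Q where "Q = (\<lambda>X. {B \<in> \<G>. p B \<in> X}) ` P - {{}}"
  have Q: "is_partition Q \<G>"
    unfolding Q_def using P(1) assms(4) by (rule is_partition_preimage)
  have "finite P"
    using P(1) assms(2) by (auto simp: is_partition_def intro: finite_UnionD)
  then have "card Q \<le> card P"
    unfolding Q_def by (meson card_Diff1_le card_image_le le_trans)
  have small: "bdiam Y < bdiam \<G>" if "Y \<in> Q" for Y
  proof -
    obtain X where X: "X \<in> P" "Y = {B \<in> \<G>. p B \<in> X}" "Y \<noteq> {}"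
      using \<open>Y \<in> Q\<close> by (auto simp: Q_def)
    have "finite X"
      using X(1) P(1) assms(2) by (auto simp: is_partition_def intro: finite_subset)
    have "bdiam Y \<le> bdiam X + c"
      unfolding X(2) using \<open>finite X\<close> assms(1) X(3)[unfolded X(2)] dist by (rule bdiam_preimage_le)
    then show ?thesis
      using P(2) X(1) diam by fastforce
  qed
  have "card \<G> \<noteq> 1"
  proof
    assume "card \<G> = 1"
    then obtain B where "\<G> = {B}"
      by (rule card_1_singletonE)
    moreover from this have "p B \<in> \<H>"
      using assms(4) by blast
    ultimately show False
      using diam bdiam_pos[OF assms(2,3) False] by (simp add: bdiam_singleton)
  qed
  then have "borsuk \<G> \<le> enat (card Q)"
    using Q small by (rule borsuk_le_card)
  also have "\<dots> \<le> borsuk \<H>"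
    using \<open>card Q \<le> card P\<close> P(3) by simp
  finally show ?thesis .
qed

section \<open>Gluing L into H at v0\<close>

definition glue_vertex :: "'v \<Rightarrow> 'w \<Rightarrow> 'v \<Rightarrow> 'v + 'w" where
  "glue_vertex v0 w u = (if u = v0 then Inr w else Inl u)"

definition contract_vertex :: "'v \<Rightarrow> 'v + 'w \<Rightarrow> 'v" where
  "contract_vertex v0 x = (case x of Inl u \<Rightarrow> u | Inr _ \<Rightarrow> v0)"

lemma contract_glue_vertex [simp]: "contract_vertex v0 (glue_vertex v0 w u) = u"
  by (simp add: contract_vertex_def glue_vertex_def)

lemma glue_ends_Inl:
  "glue_ends endsH v0 endsL phi (Inl e) =
    (glue_vertex v0 (phi e) (fst (endsH e)), glue_vertex v0 (phi e) (snd (endsH e)))"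
  by (simp add: glue_ends_def glue_vertex_def)

lemma glue_ends_Inr:
  "glue_ends endsH v0 endsL phi (Inr f) = (Inr (fst (endsL f)), Inr (snd (endsL f)))"
  by (simp add: glue_ends_def)

lemma wf_graph_glue:
  assumes "wf_graph VH EH endsH" "wf_graph VL EL endsL"
    "\<forall>e\<in>EH. (fst (endsH e) = v0 \<or> snd (endsH e) = v0) \<longrightarrow> phi e \<in> VL"
  shows "wf_graph (glue_vertices VH v0 VL) (glue_edges EH EL) (glue_ends endsH v0 endsL phi)"
  using assms unfolding wf_graph_def glue_vertices_def glue_edges_def
  by (auto simp: glue_ends_Inl glue_ends_Inr glue_vertex_def)

lemma card_glue_vertices:
  assumes "finite VH" "v0 \<in> VH" "finite VL"
  shows "card (glue_vertices VH v0 VL) + 1 = card VH + card VL"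
  using assms card_Plus[of "VH - {v0}" VL] card_Suc_Diff1[OF assms(1,2)]
  by (simp add: glue_vertices_def Plus_def)

lemma glue_connected_on_Inr:
  assumes "connected_on VL T endsL" "w \<in> VL" "w' \<in> VL"
  shows "(Inr w, Inr w') \<in> (adj (Inl ` B \<union> Inr ` T) (glue_ends endsH v0 endsL phi))\<^sup>*"
proof -
  have "(w, w') \<in> (adj T endsL)\<^sup>*"
    using assms by (simp add: connected_on_def)
  then show ?thesis
  proof (rule rtrancl_map_rtrancl)
    fix x y assume "(x, y) \<in> adj T endsL"
    then obtain f where "f \<in> T" "endsL f = (x, y) \<or> endsL f = (y, x)"
      by (auto simp: adj_def)
    then have "(Inr x, Inr y) \<in> adj (Inl ` B \<union> Inr ` T) (glue_ends endsH v0 endsL phi)"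
      unfolding adj_def by (force simp: glue_ends_Inr)
    then show "(Inr x, Inr y) \<in> (adj (Inl ` B \<union> Inr ` T) (glue_ends endsH v0 endsL phi))\<^sup>*"
      by blast
  qed
qed

lemma glue_vertex_adj:
  assumes phi: "\<forall>e\<in>EH. (fst (endsH e) = v0 \<or> snd (endsH e) = v0) \<longrightarrow> phi e \<in> VL"
    and "B \<subseteq> EH" "connected_on VL T endsL" "w0 \<in> VL" "(x, y) \<in> adj B endsH"
  shows "(glue_vertex v0 w0 x, glue_vertex v0 w0 y)
    \<in> (adj (Inl ` B \<union> Inr ` T) (glue_ends endsH v0 endsL phi))\<^sup>*"
proof -
  let ?R = "adj (Inl ` B \<union> Inr ` T) (glue_ends endsH v0 endsL phi)"
  obtain e where e: "e \<in> B" "endsH e = (x, y) \<or> endsH e = (y, x)"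
    using assms(5) unfolding adj_def by blast
  let ?r = "glue_vertex v0 (phi e)"
  have "glue_ends endsH v0 endsL phi (Inl e) = (?r x, ?r y) \<or>
      glue_ends endsH v0 endsL phi (Inl e) = (?r y, ?r x)"
    using e(2) by (auto simp: glue_ends_Inl)
  then have "(?r x, ?r y) \<in> ?R"
    using e(1) unfolding adj_def by blast
  moreover have to_r: "(glue_vertex v0 w0 u, ?r u) \<in> ?R\<^sup>*" if "u = x \<or> u = y" for u
  proof (cases "u = v0")
    case True
    then have "phi e \<in> VL"
      using phi e assms(2) that by auto
    then show ?thesis
      using glue_connected_on_Inr[OF assms(3,4)] True by (simp add: glue_vertex_def)
  qed (simp add: glue_vertex_def)
  moreover have "(?r y, glue_vertex v0 w0 y) \<in> ?R\<^sup>*"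
    using to_r[of y] by (simp add: adj_rtrancl_sym)
  ultimately show ?thesis
    using to_r[of x] by (meson r_into_rtrancl rtrancl_trans)
qed

lemma contract_vertex_adj:
  assumes "(x, y) \<in> adj B (glue_ends endsH v0 endsL phi)"
  shows "(contract_vertex v0 x, contract_vertex v0 y) \<in> (adj {e. Inl e \<in> B} endsH)\<^sup>*"
proof -
  obtain g where g: "g \<in> B"
    "glue_ends endsH v0 endsL phi g = (x, y) \<or> glue_ends endsH v0 endsL phi g = (y, x)"
    using assms unfolding adj_def by blast
  show ?thesis
  proof (cases g)
    case (Inl e)
    then have "endsH e = (contract_vertex v0 x, contract_vertex v0 y) \<or>
        endsH e = (contract_vertex v0 y, contract_vertex v0 x)"
      using g(2) by (cases "endsH e") (auto simp: glue_ends_Inl)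
    then show ?thesis
      using g(1) Inl unfolding adj_def by blast
  next
    case (Inr f)
    then show ?thesis
      using g(2) by (auto simp: glue_ends_Inr contract_vertex_def)
  qed
qed

lemma glue_connected_on:
  assumes phi: "\<forall>e\<in>EH. (fst (endsH e) = v0 \<or> snd (endsH e) = v0) \<longrightarrow> phi e \<in> VL"
    and "B \<subseteq> EH" "v0 \<in> VH" "connected_on VH B endsH" "connected_on VL T endsL"
  shows "connected_on (glue_vertices VH v0 VL) (Inl ` B \<union> Inr ` T) (glue_ends endsH v0 endsL phi)"
proof -
  obtain w0 where "w0 \<in> VL"
    using assms(5) by (auto simp: connected_on_def)
  show ?thesis
  proof (rule connected_onI_root)
    show "Inr w0 \<in> glue_vertices VH v0 VL"
      using \<open>w0 \<in> VL\<close> by (simp add: glue_vertices_def)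
    fix x assume "x \<in> glue_vertices VH v0 VL"
    then consider u where "u \<in> VH" "u \<noteq> v0" "x = Inl u" | w where "w \<in> VL" "x = Inr w"
      by (auto simp: glue_vertices_def)
    then show "(Inr w0, x) \<in> (adj (Inl ` B \<union> Inr ` T) (glue_ends endsH v0 endsL phi))\<^sup>*"
    proof cases
      case 1
      have "(v0, u) \<in> (adj B endsH)\<^sup>*"
        using assms(3,4) 1 by (simp add: connected_on_def)
      then have "(glue_vertex v0 w0 v0, glue_vertex v0 w0 u)
          \<in> (adj (Inl ` B \<union> Inr ` T) (glue_ends endsH v0 endsL phi))\<^sup>*"
        by (rule rtrancl_map_rtrancl) (rule glue_vertex_adj[OF phi assms(2,5) \<open>w0 \<in> VL\<close>])
      then show ?thesis
        using 1 by (simp add: glue_vertex_def)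
    next
      case 2
      then show ?thesis
        using glue_connected_on_Inr[OF assms(5) \<open>w0 \<in> VL\<close>] by simp
    qed
  qed
qed

lemma glue_connected_on_restrict:
  assumes "v0 \<in> VH" "VL \<noteq> {}"
    and "connected_on (glue_vertices VH v0 VL) B (glue_ends endsH v0 endsL phi)"
  shows "connected_on VH {e. Inl e \<in> B} endsH"
proof (rule connected_onI_root)
  show "v0 \<in> VH"
    by (rule assms(1))
  obtain w0 where "w0 \<in> VL"
    using assms(2) by blast
  fix u assume "u \<in> VH"
  then have "(glue_vertex v0 w0 v0, glue_vertex v0 w0 u) \<in> (adj B (glue_ends endsH v0 endsL phi))\<^sup>*"
    using assms \<open>w0 \<in> VL\<close> by (auto simp: connected_on_def glue_vertices_def glue_vertex_def)
  from rtrancl_map_rtrancl[where h = "contract_vertex v0", OF this contract_vertex_adj]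
  show "(v0, u) \<in> (adj {e. Inl e \<in> B} endsH)\<^sup>*"
    by simp
qed

lemma graphic_basisD:
  assumes "wf_graph V E ends" "B \<in> graphic_bases V E ends"
  shows "B \<subseteq> E" "finite B" "connected_on V B ends" "card V = card B + 1"
  using assms spanning_tree_card[OF assms(1)]
  by (auto simp: graphic_bases_def spanning_tree_def wf_graph_def intro: finite_subset)

lemma graphic_basis_glueI:
  assumes "wf_graph VH EH endsH" "wf_graph VL EL endsL" "v0 \<in> VH"
    and phi: "\<forall>e\<in>EH. (fst (endsH e) = v0 \<or> snd (endsH e) = v0) \<longrightarrow> phi e \<in> VL"
    and B: "B \<in> graphic_bases VH EH endsH" and T: "T \<in> graphic_bases VL EL endsL"
  shows "Inl ` B \<union> Inr ` T \<in>
    graphic_bases (glue_vertices VH v0 VL) (glue_edges EH EL) (glue_ends endsH v0 endsL phi)"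
  unfolding graphic_bases_def mem_Collect_eq
proof (rule spanning_treeI_card[OF wf_graph_glue[OF assms(1,2) phi]])
  note B' = graphic_basisD[OF assms(1) B] and T' = graphic_basisD[OF assms(2) T]
  show "Inl ` B \<union> Inr ` T \<subseteq> glue_edges EH EL"
    using B'(1) T'(1) by (auto simp: glue_edges_def)
  show "connected_on (glue_vertices VH v0 VL) (Inl ` B \<union> Inr ` T) (glue_ends endsH v0 endsL phi)"
    using phi B'(1) assms(3) B'(3) T'(3) by (rule glue_connected_on)
  have "card (Inl ` B \<union> Inr ` T) = card B + card T"
    using card_Plus[OF B'(2) T'(2)] by (simp add: Plus_def)
  moreover have "card (glue_vertices VH v0 VL) + 1 = card VH + card VL"
    using assms(1,2,3) by (intro card_glue_vertices) (auto simp: wf_graph_def)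
  ultimately show "card (glue_vertices VH v0 VL) = card (Inl ` B \<union> Inr ` T) + 1"
    using B'(4) T'(4) by simp
qed

lemma graphic_basis_glue_restrict:
  assumes "wf_graph VH EH endsH" "v0 \<in> VH" "VL \<noteq> {}"
    and B: "B \<in> graphic_bases (glue_vertices VH v0 VL) (glue_edges EH EL) (glue_ends endsH v0 endsL phi)"
  shows "\<exists>A\<in>graphic_bases VH EH endsH. Inl ` A \<subseteq> B"
proof -
  have "B \<subseteq> glue_edges EH EL" "connected_on (glue_vertices VH v0 VL) B (glue_ends endsH v0 endsL phi)"
    using B by (auto simp: graphic_bases_def spanning_tree_def)
  then have "{e. Inl e \<in> B} \<subseteq> EH" "connected_on VH {e. Inl e \<in> B} endsH"
    using glue_connected_on_restrict[OF assms(2,3)] by (auto simp: glue_edges_def)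
  moreover from this(1) have "finite {e. Inl e \<in> B}"
    using assms(1) by (auto simp: wf_graph_def intro: finite_subset)
  ultimately obtain A where "A \<subseteq> {e. Inl e \<in> B}" "spanning_tree VH EH endsH A"
    using connected_on_spanning_tree_exists[of "{e. Inl e \<in> B}" VH endsH EH] by blast
  then show ?thesis
    by (auto simp: graphic_bases_def)
qed

lemma sym_dist_glue_le:
  fixes EH :: "'e set" and EL :: "'f set"
  assumes "wf_graph VH EH endsH" "wf_graph VL EL endsL" "v0 \<in> VH"
    and phi: "\<forall>e\<in>EH. (fst (endsH e) = v0 \<or> snd (endsH e) = v0) \<longrightarrow> phi e \<in> VL"
    and B: "B \<in> graphic_bases (glue_vertices VH v0 VL) (glue_edges EH EL) (glue_ends endsH v0 endsL phi)"
      "B' \<in> graphic_bases (glue_vertices VH v0 VL) (glue_edges EH EL) (glue_ends endsH v0 endsL phi)"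
    and A: "A \<in> graphic_bases VH EH endsH" "A' \<in> graphic_bases VH EH endsH"
    and sub: "Inl ` A \<subseteq> B" "Inl ` A' \<subseteq> B'"
  shows "sym_dist B B' \<le> sym_dist A A' + 2 * (card VL - 1)"
proof -
  note wfG = wf_graph_glue[OF assms(1,2) phi]
  note B1 = graphic_basisD[OF wfG B(1)] and B2 = graphic_basisD[OF wfG B(2)]
  note A1 = graphic_basisD[OF assms(1) A(1)] and A2 = graphic_basisD[OF assms(1) A(2)]
  have "Inl ` (A \<inter> A') \<subseteq> B \<inter> B'"
    using sub by blast
  then have "card (Inl ` (A \<inter> A') :: ('e + 'f) set) \<le> card (B \<inter> B')"
    using B1(2) by (intro card_mono) auto
  then have "card (A \<inter> A') \<le> card (B \<inter> B')"
    by (simp add: card_image)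
  then have "sym_dist B B' + card A + card A' \<le> sym_dist A A' + card B + card B'"
    by (rule sym_dist_le_of_card_Int_le[OF A1(2) A2(2) B1(2) B2(2)])
  moreover have "card (glue_vertices VH v0 VL) + 1 = card VH + card VL"
    using assms(1,2,3) by (intro card_glue_vertices) (auto simp: wf_graph_def)
  ultimately show ?thesis
    using A1(4) A2(4) B1(4) B2(4) by arith
qed

lemma bdiam_glue_ge:
  assumes "wf_graph VH EH endsH" "connected_on VH EH endsH" "wf_graph VL EL endsL" "v0 \<in> VH"
    and phi: "\<forall>e\<in>EH. (fst (endsH e) = v0 \<or> snd (endsH e) = v0) \<longrightarrow> phi e \<in> VL"
    and T: "T1 \<in> graphic_bases VL EL endsL" "T2 \<in> graphic_bases VL EL endsL" "T1 \<inter> T2 = {}"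
  shows "bdiam (graphic_bases VH EH endsH) + 2 * (card VL - 1) \<le>
    bdiam (graphic_bases (glue_vertices VH v0 VL) (glue_edges EH EL) (glue_ends endsH v0 endsL phi))"
proof -
  obtain A A' where A: "A \<in> graphic_bases VH EH endsH" "A' \<in> graphic_bases VH EH endsH"
    and diam: "bdiam (graphic_bases VH EH endsH) = sym_dist A A'"
    using bdiam_attained finite_graphic_bases[OF assms(1)] graphic_bases_nonempty[OF assms(1,2)]
    by metis
  note A1 = graphic_basisD[OF assms(1) A(1)] and A2 = graphic_basisD[OF assms(1) A(2)]
  note T1 = graphic_basisD[OF assms(3) T(1)] and T2 = graphic_basisD[OF assms(3) T(2)]
  have "bdiam (graphic_bases VH EH endsH) + 2 * (card VL - 1) =
      sym_dist (Inl ` A \<union> Inr ` T1) (Inl ` A' \<union> Inr ` T2)"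
    using diam T1(2,4) T2(2,4) T(3) A1(2) A2(2)
    by (simp add: sym_dist_Inl_Inr sym_dist_disjoint card_Un_disjoint)
  also have "\<dots> \<le> bdiam (graphic_bases (glue_vertices VH v0 VL) (glue_edges EH EL)
      (glue_ends endsH v0 endsL phi))"
    using finite_graphic_bases[OF wf_graph_glue[OF assms(1,3) phi]]
      graphic_basis_glueI[OF assms(1,3,4) phi A(1) T(1)] graphic_basis_glueI[OF assms(1,3,4) phi A(2) T(2)]
    by (rule sym_dist_le_bdiam)
  finally show ?thesis .
qed

theorem proposition6p5:
  fixes VH :: "'v set" and EH :: "'e set" and endsH :: "'e \<Rightarrow> 'v \<times> 'v" and v0 :: 'v
    and VL :: "'w set" and EL :: "'f set" and endsL :: "'f \<Rightarrow> 'w \<times> 'w"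
    and phi :: "'e \<Rightarrow> 'w"
  assumes H: "wf_graph VH EH endsH" "connected_on VH EH endsH" "loopless EH endsH" "v0 \<in> VH"
    and L: "wf_graph VL EL endsL" "connected_on VL EL endsL"
    and degL: "card VL \<ge> degree EH endsH v0"
    and phi: "\<forall>e\<in>EH. (fst (endsH e) = v0 \<or> snd (endsH e) = v0) \<longrightarrow> phi e \<in> VL"
      "inj_on phi {e\<in>EH. fst (endsH e) = v0 \<or> snd (endsH e) = v0}"
    and two_trees: "\<exists>T1 T2. T1 \<in> graphic_bases VL EL endsL \<and> T2 \<in> graphic_bases VL EL endsL
                       \<and> T1 \<inter> T2 = {}"
  shows "borsuk (graphic_bases (glue_vertices VH v0 VL) (glue_edges EH EL) (glue_ends endsH v0 endsL phi))
         \<le> borsuk (graphic_bases VH EH endsH)"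
proof -
  let ?BH = "graphic_bases VH EH endsH"
  let ?BG = "graphic_bases (glue_vertices VH v0 VL) (glue_edges EH EL) (glue_ends endsH v0 endsL phi)"
  obtain T1 T2 where T: "T1 \<in> graphic_bases VL EL endsL" "T2 \<in> graphic_bases VL EL endsL" "T1 \<inter> T2 = {}"
    using two_trees by blast
  have "VL \<noteq> {}"
    using L(2) by (simp add: connected_on_def)
  then have restrict: "\<forall>B\<in>?BG. \<exists>A. A \<in> ?BH \<and> Inl ` A \<subseteq> B"
    using graphic_basis_glue_restrict[OF H(1,4) \<open>VL \<noteq> {}\<close>] by blast
  obtain p where p: "\<forall>B\<in>?BG. p B \<in> ?BH \<and> Inl ` p B \<subseteq> B"
    using bchoice[OF restrict] by blast
  show ?thesis
  proof (rule borsuk_le_of_pullback[where p = p])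
    show "finite ?BG" "finite ?BH"
      using finite_graphic_bases wf_graph_glue[OF H(1) L(1) phi(1)] H(1) by blast+
    show "finite A" if "A \<in> ?BH" for A
      using graphic_basisD(2)[OF H(1) that] .
    show "p ` ?BG \<subseteq> ?BH"
      using p by blast
    show "sym_dist B B' \<le> sym_dist (p B) (p B') + 2 * (card VL - 1)" if "B \<in> ?BG" "B' \<in> ?BG" for B B'
      using sym_dist_glue_le[OF H(1) L(1) H(4) phi(1) that] p that by blast
    show "bdiam ?BH + 2 * (card VL - 1) \<le> bdiam ?BG"
      using bdiam_glue_ge[OF H(1,2) L(1) H(4) phi(1) T] .
  qed
qed

end
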